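(* Let $h,n\geq2$ and $V\leq S_h$. Then $V\times\{id\}$ is a symmetry group with respect to $(h,n)$ if and only if it is an anonymity group with respect to $(h,n)$. In particular, every anonymity group with respect to $(h,n)$ is a symmetry group with respect to $(h,n)$.
   Context: Permutations compose as $(\sigma\tau)(x)=\sigma(\tau(x))$. Let $G=S_h\times S_n$ and $\mathcal{P}=(S_n)^h$ (preference profiles), with $G$ acting by $(p^{(\varphi,\psi)})_i=\psi\,p_{\varphi^{-1}(i)}$. A social preference function (SPF) is any $F:\mathcal{P}\to S_n$. Its symmetry group is $G(F)=\{(\varphi,\psi)\in G: F(p^{(\varphi,\psi)})=\psi F(p)\ \forall p\}$ and its anonymity group is $G_1(F)=G(F)\cap(S_h\times\{id\})$. $U\leq G$ is a symmetry group with respect to $(h,n)$ if $U=G(F)$ for some SPF $F$; $U\leq S_h\times\{id\}$ is an anonymity group with respect to $(h,n)$ if $U=G_1(F)$ for some SPF $F$. *)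

theory Defs
  imports "HOL-Combinatorics.Permutations"
begin

text \<open>Voters are 0..<h, alternatives are 0..<n. S_k is the set of permutations of {..<k}.
  Composition is function composition: (sigma tau)(x) = sigma (tau x).\<close>

definition Sym :: "nat \<Rightarrow> (nat \<Rightarrow> nat) set" where
  "Sym k = {s. s permutes {..<k}}"

definition Gr :: "nat \<Rightarrow> nat \<Rightarrow> ((nat \<Rightarrow> nat) \<times> (nat \<Rightarrow> nat)) set" where
  "Gr h n = Sym h \<times> Sym n"

definition profiles :: "nat \<Rightarrow> nat \<Rightarrow> (nat \<Rightarrow> nat \<Rightarrow> nat) set" where
  "profiles h n = {p. (\<forall>i<h. p i \<in> Sym n) \<and> (\<forall>i\<ge>h. p i = id)}"

definition act :: "nat \<Rightarrow> (nat \<Rightarrow> nat) \<Rightarrow> (nat \<Rightarrow> nat) \<Rightarrow> (nat \<Rightarrow> nat \<Rightarrow> nat) \<Rightarrow> (nat \<Rightarrow> nat \<Rightarrow> nat)" where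
  "act h \<phi> \<psi> p = (\<lambda>i. if i < h then \<psi> \<circ> p (inv \<phi> i) else id)"

text \<open>A social preference function: any map from profiles to S_n (values off profiles irrelevant).\<close>
definition SPF :: "nat \<Rightarrow> nat \<Rightarrow> ((nat \<Rightarrow> nat \<Rightarrow> nat) \<Rightarrow> (nat \<Rightarrow> nat)) \<Rightarrow> bool" where
  "SPF h n F \<longleftrightarrow> (\<forall>p\<in>profiles h n. F p \<in> Sym n)"

definition symgroup :: "nat \<Rightarrow> nat \<Rightarrow> ((nat \<Rightarrow> nat \<Rightarrow> nat) \<Rightarrow> (nat \<Rightarrow> nat)) \<Rightarrow> ((nat \<Rightarrow> nat) \<times> (nat \<Rightarrow> nat)) set" where
  "symgroup h n F = {(\<phi>, \<psi>) \<in> Gr h n. \<forall>p\<in>profiles h n. F (act h \<phi> \<psi> p) = \<psi> \<circ> F p}"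

definition anongroup :: "nat \<Rightarrow> nat \<Rightarrow> ((nat \<Rightarrow> nat \<Rightarrow> nat) \<Rightarrow> (nat \<Rightarrow> nat)) \<Rightarrow> ((nat \<Rightarrow> nat) \<times> (nat \<Rightarrow> nat)) set" where
  "anongroup h n F = symgroup h n F \<inter> (Sym h \<times> {id})"

definition is_symmetry_group :: "nat \<Rightarrow> nat \<Rightarrow> ((nat \<Rightarrow> nat) \<times> (nat \<Rightarrow> nat)) set \<Rightarrow> bool" where
  "is_symmetry_group h n U \<longleftrightarrow> (\<exists>F. SPF h n F \<and> U = symgroup h n F)"

definition is_anonymity_group :: "nat \<Rightarrow> nat \<Rightarrow> ((nat \<Rightarrow> nat) \<times> (nat \<Rightarrow> nat)) set \<Rightarrow> bool" where
  "is_anonymity_group h n U \<longleftrightarrow> (\<exists>F. SPF h n F \<and> U = anongroup h n F)"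

definition perm_subgroup :: "nat \<Rightarrow> (nat \<Rightarrow> nat) set \<Rightarrow> bool" where
  "perm_subgroup h V \<longleftrightarrow> V \<subseteq> Sym h \<and> id \<in> V \<and>
     (\<forall>a\<in>V. \<forall>b\<in>V. a \<circ> b \<in> V) \<and> (\<forall>a\<in>V. inv a \<in> V)"

end

theory Submission
  imports Defs
begin

text \<open>Let F' agree with the SPF F except that it returns id on unanimous profiles. The profile
  in which every voter submits id is unanimous, and so are all its images under G; comparing
  F' at such an image with \<psi> \<circ> F' shows that (\<phi>, \<psi>) \<in> G(F') forces \<psi> = id. Unanimity is
  G-invariant and unanimous profiles are fixed by S_h \<times> {id}, so for \<psi> = id the symmetry
  condition on F' is exactly anonymity of F, i.e. G(F') = G_1(F). Conversely, a symmetry group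
  G(F) inside S_h \<times> {id} equals G_1(F). Neither argument needs the bounds h, n \<ge> 2.\<close>

definition unanimous :: "nat \<Rightarrow> (nat \<Rightarrow> nat \<Rightarrow> nat) \<Rightarrow> bool" where
  "unanimous h p \<longleftrightarrow> (\<forall>i<h. \<forall>j<h. p i = p j)"

definition id_on_unanimous ::
    "nat \<Rightarrow> ((nat \<Rightarrow> nat \<Rightarrow> nat) \<Rightarrow> (nat \<Rightarrow> nat)) \<Rightarrow> (nat \<Rightarrow> nat \<Rightarrow> nat) \<Rightarrow> (nat \<Rightarrow> nat)" where
  "id_on_unanimous h F p = (if unanimous h p then id else F p)"

lemma unanimous_reindex:
  assumes "\<phi> permutes {..<h}"
  shows "unanimous h (\<lambda>i. p (\<phi> i)) \<longleftrightarrow> unanimous h p"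
proof -
  have "(\<forall>i\<in>{..<h}. \<forall>j\<in>{..<h}. p (\<phi> i) = p (\<phi> j)) \<longleftrightarrow>
      (\<forall>i\<in>\<phi> ` {..<h}. \<forall>j\<in>\<phi> ` {..<h}. p i = p j)"
    by simp
  also have "\<phi> ` {..<h} = {..<h}" using assms by (rule permutes_image)
  finally show ?thesis unfolding unanimous_def Ball_def lessThan_iff .
qed

lemma unanimous_comp_left_iff:
  assumes "inj \<psi>"
  shows "unanimous h (\<lambda>i. \<psi> \<circ> p i) \<longleftrightarrow> unanimous h p"
  using injD[OF fun.inj_map[OF assms]] unfolding unanimous_def by metis

lemma unanimous_act_iff:
  assumes "\<phi> permutes {..<h}" and "\<psi> permutes {..<n}"
  shows "unanimous h (act h \<phi> \<psi> p) \<longleftrightarrow> unanimous h p"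
proof -
  have "unanimous h (act h \<phi> \<psi> p) \<longleftrightarrow> unanimous h (\<lambda>i. \<psi> \<circ> p (inv \<phi> i))"
    unfolding unanimous_def act_def by simp
  also have "\<dots> \<longleftrightarrow> unanimous h (\<lambda>i. \<psi> \<circ> p i)"
    using unanimous_reindex[OF permutes_inv[OF assms(1)]] .
  also have "\<dots> \<longleftrightarrow> unanimous h p"
    using unanimous_comp_left_iff[OF permutes_inj[OF assms(2)]] .
  finally show ?thesis .
qed

lemma act_id_unanimous:
  assumes "\<phi> permutes {..<h}" and "p \<in> profiles h n" and "unanimous h p"
  shows "act h \<phi> id p = p"
proof
  fix i
  show "act h \<phi> id p i = p i"
  proof (cases "i < h")
    case True
    then have "inv \<phi> i < h"
      using permutes_in_image[OF permutes_inv[OF assms(1)]] by simp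
    with True assms(3) have "p (inv \<phi> i) = p i" unfolding unanimous_def by blast
    with True show ?thesis unfolding act_def by simp
  next
    case False
    with assms(2) show ?thesis unfolding act_def profiles_def by simp
  qed
qed

lemma SPF_id_on_unanimous:
  assumes "SPF h n F"
  shows "SPF h n (id_on_unanimous h F)"
  using assms permutes_id unfolding SPF_def id_on_unanimous_def Sym_def by auto

lemma symgroup_id_on_unanimous_snd:
  assumes "(\<phi>, \<psi>) \<in> symgroup h n (id_on_unanimous h F)"
  shows "\<psi> = id"
proof -
  define q :: "nat \<Rightarrow> nat \<Rightarrow> nat" where "q = (\<lambda>_. id)"
  have q: "q \<in> profiles h n" "unanimous h q"
    using permutes_id unfolding q_def profiles_def Sym_def unanimous_def by auto
  have "\<phi> permutes {..<h}" "\<psi> permutes {..<n}"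
    using assms unfolding symgroup_def Gr_def Sym_def by auto
  then have "unanimous h (act h \<phi> \<psi> q)"
    using q(2) unanimous_act_iff by blast
  then have "id = \<psi> \<circ> id_on_unanimous h F q"
    using assms q(1) unfolding symgroup_def id_on_unanimous_def by auto
  with q(2) show ?thesis unfolding id_on_unanimous_def by simp
qed

lemma symgroup_id_on_unanimous:
  "symgroup h n (id_on_unanimous h F) = anongroup h n F"
proof (intro set_eqI iffI)
  fix x
  assume x: "x \<in> symgroup h n (id_on_unanimous h F)"
  obtain \<phi> \<psi> where x_eq: "x = (\<phi>, \<psi>)" by fastforce
  with x have "\<psi> = id" by (simp add: symgroup_id_on_unanimous_snd)
  with x x_eq have \<phi>: "\<phi> permutes {..<h}"
    and eq: "\<And>p. p \<in> profiles h n \<Longrightarrow>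
      id_on_unanimous h F (act h \<phi> id p) = id_on_unanimous h F p"
    unfolding symgroup_def Gr_def Sym_def by auto
  have "F (act h \<phi> id p) = F p" if "p \<in> profiles h n" for p
    using eq[OF that] act_id_unanimous[OF \<phi> that] unanimous_act_iff[OF \<phi> permutes_id]
    unfolding id_on_unanimous_def by (cases "unanimous h p") auto
  with x x_eq \<open>\<psi> = id\<close> show "x \<in> anongroup h n F"
    unfolding anongroup_def symgroup_def Gr_def by auto
next
  fix x
  assume x: "x \<in> anongroup h n F"
  then obtain \<phi> where x_eq: "x = (\<phi>, id)" and \<phi>: "\<phi> permutes {..<h}"
    unfolding anongroup_def Sym_def by auto
  with x show "x \<in> symgroup h n (id_on_unanimous h F)"
    using unanimous_act_iff[OF \<phi> permutes_id]
    unfolding anongroup_def symgroup_def id_on_unanimous_def by auto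
qed

lemma anonymity_group_is_symmetry_group:
  assumes "is_anonymity_group h n U"
  shows "is_symmetry_group h n U"
  using assms SPF_id_on_unanimous symgroup_id_on_unanimous
  unfolding is_anonymity_group_def is_symmetry_group_def by metis

lemma symmetry_group_is_anonymity_group:
  assumes "is_symmetry_group h n U" and "U \<subseteq> Sym h \<times> {id}"
  shows "is_anonymity_group h n U"
  using assms unfolding is_symmetry_group_def is_anonymity_group_def anongroup_def
  by (metis inf.absorb1)

theorem mainTheorem6:
  fixes h n :: nat and V :: "(nat \<Rightarrow> nat) set"
  assumes "h \<ge> 2" and "n \<ge> 2" and "perm_subgroup h V"
  shows "(is_symmetry_group h n (V \<times> {id}) \<longleftrightarrow> is_anonymity_group h n (V \<times> {id}))
    \<and> (\<forall>U. is_anonymity_group h n U \<longrightarrow> is_symmetry_group h n U)"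
proof -
  have "V \<times> {id} \<subseteq> Sym h \<times> {id}"
    using assms(3) unfolding perm_subgroup_def by blast
  then have "is_symmetry_group h n (V \<times> {id}) \<longleftrightarrow> is_anonymity_group h n (V \<times> {id})"
    using symmetry_group_is_anonymity_group anonymity_group_is_symmetry_group by iprover
  then show ?thesis using anonymity_group_is_symmetry_group by iprover
qed

end
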